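(* Consider the repeated long trading strategy described in the context, and let $\mu_t=\frac1t\ln\frac{W_t}{W_0}$. If the first two moments of the trade length are finite, then $\mathbb{V}[\mu_t]=O(1/t)$ as $t\to\infty$.
   Context: An investor can hold a risk-free asset with zero interest rate and a risky security with price $p_t=e^{X_t}$, where $(X_t)_{t\ge0}$ is a continuous stochastic process. Transaction costs are proportional to the price, with total cost parameter $c>0$ per trade. Fix levels $L<D<U$ with $U-D>c$ and a leverage $f\ge0$. The strategy: when $X$ reaches $D$, invest the fraction $f$ of the whole wealth in the risky security; close the position the first time $X$ leaves $(L,U)$, at $U$ (positive scenario) or at $L$ (negative scenario); then wait for $X$ to return to $D$ and repeat. Let $\tau_e=\inf\{t:X_t\notin(L,U)\}$ with $X_0=D$, $p^+=\mathbb{P}[X_{\tau_e}=U\mid X_0=D]$, $p^-=1-p^+$. The trade length is the time between two successive trades: $\tau^+=\tau_e+\inf\{t:X_t\le D\mid X_0=U\}$ in the positive scenario and $\tau^-=\tau_e+\inf\{t:X_t\ge D\mid X_0=L\}$ in the negative scenario; its distribution is the mixture with weights $p^+,p^-$ of those of $\tau^+,\tau^-$. Set $v^\pm$ by $v^+=e^{U-D-c}-1$, $v^-=e^{L-D-c}-1$. The wealth at successive trade times satisfies $W_{t_{i+1}}=W_{t_i}(1+fv)$ with $v=v^+$ (positive scenario) or $v=v^-$ (negative scenario), and $W_t$ is the wealth right after the last trade before $t$. Successive trades (outcomes and trade lengths) are independent and identically distributed, so the trade times form an ordinary renewal process. *)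

theory Defs
  imports "HOL-Probability.Probability" "HOL-Library.Landau_Symbols"
begin

definition vplus :: "real \<Rightarrow> real \<Rightarrow> real \<Rightarrow> real" where
  "vplus D U c = exp (U - D - c) - 1"

definition vminus :: "real \<Rightarrow> real \<Rightarrow> real \<Rightarrow> real" where
  "vminus L D c = exp (L - D - c) - 1"

text \<open>Wealth multiplier of one trade with leverage f; outcome True = positive scenario
  (exit at U), False = negative scenario (exit at L).\<close>
definition trade_factor :: "real \<Rightarrow> real \<Rightarrow> real \<Rightarrow> real \<Rightarrow> real \<Rightarrow> bool \<Rightarrow> real" where
  "trade_factor f L D U c s = 1 + f * (if s then vplus D U c else vminus L D c)"

text \<open>Measurable space of one trade: (outcome, trade length).\<close>
definition trade_space :: "(bool \<times> real) measure" where
  "trade_space = count_space UNIV \<Otimes>\<^sub>M borel"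

definition num_trades :: "(nat \<Rightarrow> 'a \<Rightarrow> real) \<Rightarrow> real \<Rightarrow> 'a \<Rightarrow> nat" where
  "num_trades T t \<omega> = card {n. 1 \<le> n \<and> (\<Sum>i<n. T i \<omega>) \<le> t}"

definition wealth :: "real \<Rightarrow> real \<Rightarrow> real \<Rightarrow> real \<Rightarrow> real \<Rightarrow> real \<Rightarrow>
    (nat \<Rightarrow> 'a \<Rightarrow> bool) \<Rightarrow> (nat \<Rightarrow> 'a \<Rightarrow> real) \<Rightarrow> real \<Rightarrow> 'a \<Rightarrow> real" where
  "wealth W0 f L D U c S T t \<omega> =
     W0 * (\<Prod>i<num_trades T t \<omega>. trade_factor f L D U c (S i \<omega>))"

definition growth_rate :: "real \<Rightarrow> real \<Rightarrow> real \<Rightarrow> real \<Rightarrow> real \<Rightarrow> real \<Rightarrow>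
    (nat \<Rightarrow> 'a \<Rightarrow> bool) \<Rightarrow> (nat \<Rightarrow> 'a \<Rightarrow> real) \<Rightarrow> real \<Rightarrow> 'a \<Rightarrow> real" where
  "growth_rate W0 f L D U c S T t \<omega> = (1 / t) * ln (wealth W0 f L D U c S T t \<omega> / W0)"

end

theory Submission
  imports Defs
begin

text \<open>
  Let Y_i be the log-return and T_i the length of trade i, N(t) the number of trades completed
  by time t, and rho = E Y / E T, so that t mu_t = Y_0 + ... + Y_(N(t)-1).
  Up to the last reward and the overshoot of the last trade length, t (mu_t - rho) is the sum of the
  centred increments Y_i - rho T_i over the first N(t) + 1 trades. As the event i <= N(t) is
  determined by the trades before i, these stopped increments are orthogonal, so the mean square of
  their sum is Var (Y - rho T) times E (N(t) + 1) = sum_n P(T_0 + ... + T_(n-1) <= t), and a Chernoff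
  bound shows that this renewal sum is O(t). Hence Var mu_t <= E (mu_t - rho)^2 = O(t) / t^2.
\<close>

lemma exp_minus_le_quadratic:
  fixes x :: real
  assumes "0 \<le> x"
  shows "exp (- x) \<le> 1 - x + x\<^sup>2 / 2"
proof -
  let ?g = "\<lambda>x::real. 1 - x + x\<^sup>2 / 2 - exp (- x)"
  have "?g 0 \<le> ?g x"
  proof (rule DERIV_nonneg_imp_increasing_open[OF assms])
    fix y :: real
    assume "0 < y" "y < x"
    show "\<exists>d. DERIV ?g y :> d \<and> d \<ge> 0"
    proof (intro exI conjI)
      show "DERIV ?g y :> - 1 + y + exp (- y)"
        by (auto intro!: derivative_eq_intros simp: power2_eq_square)
      show "0 \<le> - 1 + y + exp (- y)"
        using exp_minus_ge[of y] by linarith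
    qed
  qed (auto intro!: continuous_intros)
  then show ?thesis
    by simp
qed

lemma partial_sums_le_eq_atMost:
  fixes x :: "nat \<Rightarrow> real"
  assumes "\<And>i. x i \<ge> 0" and "t \<ge> 0" and "finite {n. (\<Sum>i<n. x i) \<le> t}"
  obtains j where "{n. (\<Sum>i<n. x i) \<le> t} = {..j}"
proof
  let ?B = "{n. (\<Sum>i<n. x i) \<le> t}"
  have "0 \<in> ?B"
    using assms(2) by simp
  then have "Max ?B \<in> ?B"
    using Max_in[OF assms(3)] by blast
  moreover have "(\<Sum>i<m. x i) \<le> (\<Sum>i<n. x i)" if "m \<le> n" for m n
    using that assms(1) by (intro sum_mono2) auto
  ultimately show "?B = {..Max ?B}"
    using assms(3) by (auto intro: order_trans)
qed

text \<open>
  With j arrivals by time t, y_0 + ... + y_(j-1) - rho t is the centred sum over the first j + 1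
  cycles, minus y_j, plus rho times the overshoot x_0 + ... + x_j - t, which lies in [0, x_j].
\<close>
lemma renewal_reward_deviation_le:
  fixes x y :: "nat \<Rightarrow> real" and t K \<rho> :: real and k :: nat
  assumes x_pos: "\<And>i. x i > 0" and y_bounded: "\<And>i. \<bar>y i\<bar> \<le> K" and "t > 0"
    and finite_arrivals: "finite {n. (\<Sum>i<n. x i) \<le> t}"
    and k: "card {n. (\<Sum>i<n. x i) \<le> t} \<le> k"
  shows "((\<Sum>i<card {n. 1 \<le> n \<and> (\<Sum>i<n. x i) \<le> t}. y i) - \<rho> * t)\<^sup>2
     \<le> 3 * (\<Sum>i<k. (y i - \<rho> * x i) * of_bool ((\<Sum>l<i. x l) \<le> t))\<^sup>2 + 3 * K\<^sup>2
       + 3 * \<rho>\<^sup>2 * (\<Sum>i<k. (x i)\<^sup>2 * of_bool ((\<Sum>l<i. x l) \<le> t))"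
proof -
  define P where "P n = (\<Sum>i<n. x i)" for n
  define B where "B = {n. P n \<le> t}"
  obtain j where B_eq: "B = {..j}"
    using partial_sums_le_eq_atMost[of x t] x_pos \<open>t > 0\<close> finite_arrivals
    unfolding B_def P_def by (meson less_imp_le)
  have "j \<in> B"
    using B_eq by simp
  have arrivals_eq: "{n. 1 \<le> n \<and> (\<Sum>i<n. x i) \<le> t} = {1..j}"
    using B_eq unfolding B_def P_def by auto
  have indicator_eq: "of_bool ((\<Sum>l<i. x l) \<le> t) = (of_bool (i \<le> j) :: real)" for i
    using B_eq unfolding B_def P_def by auto
  have "Suc j \<le> k"
    using k B_eq unfolding B_def P_def by simp
  have sum_cut: "(\<Sum>i<k. g i * of_bool ((\<Sum>l<i. x l) \<le> t)) = (\<Sum>i<Suc j. g i)"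
    for g :: "nat \<Rightarrow> real"
  proof -
    have "(\<Sum>i<k. g i * of_bool ((\<Sum>l<i. x l) \<le> t))
        = (\<Sum>i<Suc j. g i * of_bool ((\<Sum>l<i. x l) \<le> t))"
      using \<open>Suc j \<le> k\<close> by (intro sum.mono_neutral_right) (auto simp: indicator_eq)
    also have "\<dots> = (\<Sum>i<Suc j. g i)"
      by (intro sum.cong) (auto simp: indicator_eq)
    finally show ?thesis .
  qed
  define Q where "Q = (\<Sum>i<Suc j. y i - \<rho> * x i)"
  define d where "d = P (Suc j) - t"
  have "Suc j \<notin> B"
    using B_eq by simp
  then have "0 \<le> d" "d \<le> x j"
    using \<open>j \<in> B\<close> unfolding d_def B_def by (simp_all add: P_def)
  have decomposition: "(\<Sum>i<j. y i) - \<rho> * t = Q + (- y j) + \<rho> * d"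
    unfolding Q_def d_def P_def by (simp add: sum_subtractf sum_distrib_left algebra_simps)
  have square_sum3: "(a + b + c)\<^sup>2 \<le> 3 * a\<^sup>2 + 3 * b\<^sup>2 + 3 * c\<^sup>2" for a b c :: real
  proof -
    have "0 \<le> (a - b)\<^sup>2 + (b - c)\<^sup>2 + (a - c)\<^sup>2"
      by simp
    then show ?thesis
      by (simp add: power2_eq_square algebra_simps)
  qed
  have "(y j)\<^sup>2 \<le> K\<^sup>2"
    using y_bounded[of j] by (metis abs_ge_zero power2_abs power_mono)
  have "d\<^sup>2 \<le> (x j)\<^sup>2"
    using \<open>0 \<le> d\<close> \<open>d \<le> x j\<close> by (simp add: power_mono)
  also have "\<dots> \<le> (\<Sum>i<Suc j. (x i)\<^sup>2)"
    by (rule member_le_sum) auto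
  finally have "\<rho>\<^sup>2 * d\<^sup>2 \<le> \<rho>\<^sup>2 * (\<Sum>i<Suc j. (x i)\<^sup>2)"
    by (intro mult_left_mono) auto
  have "((\<Sum>i<j. y i) - \<rho> * t)\<^sup>2 \<le> 3 * Q\<^sup>2 + 3 * (- y j)\<^sup>2 + 3 * (\<rho> * d)\<^sup>2"
    unfolding decomposition by (rule square_sum3)
  also have "\<dots> \<le> 3 * Q\<^sup>2 + 3 * K\<^sup>2 + 3 * \<rho>\<^sup>2 * (\<Sum>i<Suc j. (x i)\<^sup>2)"
    using \<open>(y j)\<^sup>2 \<le> K\<^sup>2\<close> \<open>\<rho>\<^sup>2 * d\<^sup>2 \<le> _\<close> by (simp add: power_mult_distrib)
  finally show ?thesis
    unfolding arrivals_eq sum_cut Q_def by simp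
qed

lemma (in prob_space) variance_le_expectation_square_diff:
  fixes Z :: "'a \<Rightarrow> real"
  assumes "integrable M Z" and "integrable M (\<lambda>x. (Z x)\<^sup>2)"
  shows "variance Z \<le> expectation (\<lambda>x. (Z x - c)\<^sup>2)"
proof -
  have "expectation (\<lambda>x. (Z x - c)\<^sup>2) = expectation (\<lambda>x. (Z x)\<^sup>2 - 2 * c * Z x + c\<^sup>2)"
    by (simp add: power2_diff algebra_simps)
  also have "\<dots> = expectation (\<lambda>x. (Z x)\<^sup>2) - 2 * c * expectation Z + c\<^sup>2"
    using assms by (simp add: prob_space)
  finally have "expectation (\<lambda>x. (Z x - c)\<^sup>2)
      = variance Z + (expectation Z - c)\<^sup>2"
    using variance_eq[OF assms] by (simp add: power2_diff)
  then show ?thesis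
    by simp
qed

lemma measurable_trade_outcome[measurable]: "fst \<in> measurable trade_space (count_space UNIV)"
  unfolding trade_space_def by measurable

lemma measurable_trade_length[measurable]: "snd \<in> borel_measurable trade_space"
  unfolding trade_space_def by measurable

lemma borel_measurable_trade_outcome_fun[measurable]:
  fixes h :: "bool \<Rightarrow> real"
  shows "(\<lambda>x. h (fst x)) \<in> borel_measurable trade_space"
  by measurable

locale iid_trades = prob_space M for M :: "'a measure" +
  fixes X :: "nat \<Rightarrow> 'a \<Rightarrow> bool \<times> real"
  assumes indep_trades: "indep_vars (\<lambda>_. trade_space) X UNIV"
    and trades_ident: "\<And>i. distr M trade_space (X i) = distr M trade_space (X 0)"
    and length_pos: "\<And>i. AE \<omega> in M. snd (X i \<omega>) > 0"
    and length_integrable: "integrable M (\<lambda>\<omega>. snd (X 0 \<omega>))"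
    and length_square_integrable: "integrable M (\<lambda>\<omega>. (snd (X 0 \<omega>))\<^sup>2)"
begin

definition "mean_length = expectation (\<lambda>\<omega>. snd (X 0 \<omega>))"
definition "length_second_moment = expectation (\<lambda>\<omega>. (snd (X 0 \<omega>))\<^sup>2)"
definition "length_laplace \<theta> = expectation (\<lambda>\<omega>. exp (- \<theta> * snd (X 0 \<omega>)))"
definition "arrival n \<omega> = (\<Sum>i<n. snd (X i \<omega>))"
definition "arrival_event t n = {\<omega> \<in> space M. arrival n \<omega> \<le> t}"
definition "arrived t n \<omega> = (of_bool (arrival n \<omega> \<le> t) :: real)"

text \<open>The constant comes from the Chernoff exponent theta = 1 / max t (E T^2 / E T).\<close>
definition "renewal_bound t = 2 * exp 1 * max t (length_second_moment / mean_length) / mean_length"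

lemma measurable_trade[measurable]: "X i \<in> measurable M trade_space"
  using indep_trades unfolding indep_vars_def by auto

lemma measurable_arrival[measurable]: "arrival n \<in> borel_measurable M"
  unfolding arrival_def by measurable

lemma sets_arrival_event[measurable]: "arrival_event t n \<in> sets M"
  unfolding arrival_event_def by measurable

lemma measurable_arrived[measurable]: "arrived t n \<in> borel_measurable M"
  unfolding arrived_def by measurable

lemma integral_trade_eq:
  fixes h :: "bool \<times> real \<Rightarrow> real"
  assumes [measurable]: "h \<in> borel_measurable trade_space"
  shows "expectation (\<lambda>\<omega>. h (X i \<omega>)) = expectation (\<lambda>\<omega>. h (X 0 \<omega>))"
  using integral_distr[OF measurable_trade assms, of i] integral_distr[OF measurable_trade assms, of 0]
    trades_ident[of i]
  by simp

lemma integrable_trade_iff: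
  fixes h :: "bool \<times> real \<Rightarrow> real"
  assumes [measurable]: "h \<in> borel_measurable trade_space"
  shows "integrable M (\<lambda>\<omega>. h (X i \<omega>)) \<longleftrightarrow> integrable M (\<lambda>\<omega>. h (X 0 \<omega>))"
  using integrable_distr_eq[OF measurable_trade assms, of i]
    integrable_distr_eq[OF measurable_trade assms, of 0] trades_ident[of i]
  by simp

lemma length_integrable_trade: "integrable M (\<lambda>\<omega>. snd (X i \<omega>))"
  using length_integrable integrable_trade_iff[of snd i] by simp

lemma length_square_integrable_trade: "integrable M (\<lambda>\<omega>. (snd (X i \<omega>))\<^sup>2)"
  using length_square_integrable integrable_trade_iff[of "\<lambda>x. (snd x)\<^sup>2" i] by simp

lemma integral_prefix_mult_trade:
  fixes g :: "(nat \<Rightarrow> bool \<times> real) \<Rightarrow> real" and h :: "bool \<times> real \<Rightarrow> real"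
  assumes g_measurable[measurable]: "g \<in> borel_measurable (PiM {..<k} (\<lambda>_. trade_space))"
    and [measurable]: "h \<in> borel_measurable trade_space"
    and G_eq: "\<And>\<omega>. G \<omega> = g (restrict (\<lambda>i. X i \<omega>) {..<k})"
    and "integrable M G" and "integrable M (\<lambda>\<omega>. h (X k \<omega>))"
  shows "integrable M (\<lambda>\<omega>. G \<omega> * h (X k \<omega>))"
    and "expectation (\<lambda>\<omega>. G \<omega> * h (X k \<omega>)) = expectation G * expectation (\<lambda>\<omega>. h (X k \<omega>))"
proof -
  have prefix_indep: "indep_var (PiM {..<k} (\<lambda>_. trade_space)) (\<lambda>\<omega>. restrict (\<lambda>i. X i \<omega>) {..<k})
      (PiM {k} (\<lambda>_. trade_space)) (\<lambda>\<omega>. restrict (\<lambda>i. X i \<omega>) {k})"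
    by (rule indep_var_restrict[OF indep_trades]) auto
  have "(\<lambda>x. h (x k)) \<in> borel_measurable (PiM {k} (\<lambda>_. trade_space))"
    by measurable
  from indep_var_compose[OF prefix_indep g_measurable this]
  have indep: "indep_var borel G borel (\<lambda>\<omega>. h (X k \<omega>))"
    by (simp add: comp_def G_eq[symmetric])
  show "integrable M (\<lambda>\<omega>. G \<omega> * h (X k \<omega>))"
    by (rule indep_var_integrable[OF indep]) fact+
  show "expectation (\<lambda>\<omega>. G \<omega> * h (X k \<omega>)) = expectation G * expectation (\<lambda>\<omega>. h (X k \<omega>))"
    by (rule indep_var_lebesgue_integral[OF indep]) fact+
qed

lemma mean_length_pos: "mean_length > 0"
proof -
  have "AE \<omega> in M. snd (X 0 \<omega>) \<ge> 0"
    using length_pos[of 0] by eventually_elim simp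
  then have "mean_length \<ge> 0"
    unfolding mean_length_def by (rule integral_nonneg_AE)
  moreover have "mean_length \<noteq> 0"
  proof
    assume "mean_length = 0"
    with \<open>AE \<omega> in M. snd (X 0 \<omega>) \<ge> 0\<close> have "AE \<omega> in M. snd (X 0 \<omega>) = 0"
      unfolding mean_length_def using length_integrable
      by (subst integral_nonneg_eq_0_iff_AE[symmetric]) auto
    with length_pos[of 0] have "AE \<omega> in M. False"
      by eventually_elim auto
    then show False
      by simp
  qed
  ultimately show ?thesis
    by simp
qed

lemma integrable_exp_length:
  assumes "\<theta> \<ge> 0"
  shows "integrable M (\<lambda>\<omega>. exp (- \<theta> * snd (X i \<omega>)))"
proof (rule integrable_const_bound[where B=1])
  show "AE \<omega> in M. norm (exp (- \<theta> * snd (X i \<omega>))) \<le> 1"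
    using length_pos[of i] by eventually_elim (use assms in simp)
qed measurable

lemma prob_arrival_le:
  assumes "\<theta> > 0"
  shows "emeasure M (arrival_event t n) \<le> ennreal (exp (\<theta> * t) * length_laplace \<theta> ^ n)"
proof -
  define Y where "Y i \<omega> = exp (- \<theta> * snd (X i \<omega>))" for i \<omega>
  have "indep_vars (\<lambda>_. borel) Y UNIV"
    unfolding Y_def by (rule indep_vars_compose2[OF indep_trades]) measurable
  then have indep: "indep_vars (\<lambda>_. borel) Y {..<n}"
    by (rule indep_vars_subset) simp
  have Y_integrable: "integrable M (Y i)" for i
    unfolding Y_def using integrable_exp_length assms by simp
  have prod_integrable: "integrable M (\<lambda>\<omega>. \<Prod>i<n. Y i \<omega>)"
    by (rule indep_vars_integrable[OF _ indep Y_integrable]) simp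
  have expectation_Y: "expectation (Y i) = length_laplace \<theta>" for i
    unfolding Y_def length_laplace_def by (rule integral_trade_eq) measurable
  have "emeasure M (arrival_event t n) = (\<integral>\<^sup>+ \<omega>. indicator (arrival_event t n) \<omega> \<partial>M)"
    by simp
  also have "\<dots> \<le> (\<integral>\<^sup>+ \<omega>. ennreal (exp (\<theta> * t) * (\<Prod>i<n. Y i \<omega>)) \<partial>M)"
  proof (rule nn_integral_mono)
    fix \<omega>
    have Y_prod: "(\<Prod>i<n. Y i \<omega>) = exp (- \<theta> * arrival n \<omega>)"
      unfolding Y_def arrival_def by (simp add: exp_sum sum_distrib_left)
    show "indicator (arrival_event t n) \<omega> \<le> ennreal (exp (\<theta> * t) * (\<Prod>i<n. Y i \<omega>))"
    proof (cases "\<omega> \<in> arrival_event t n")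
      case True
      then have "1 \<le> exp (\<theta> * t - \<theta> * arrival n \<omega>)"
        using assms by (simp add: arrival_event_def mult_left_mono)
      with True show ?thesis
        by (simp add: Y_prod exp_diff exp_minus field_simps)
    qed simp
  qed
  also have "\<dots> = ennreal (expectation (\<lambda>\<omega>. exp (\<theta> * t) * (\<Prod>i<n. Y i \<omega>)))"
    using prod_integrable by (intro nn_integral_eq_integral) (auto simp: Y_def prod_nonneg)
  also have "\<dots> = ennreal (exp (\<theta> * t) * length_laplace \<theta> ^ n)"
    using indep_vars_lebesgue_integral[OF _ indep Y_integrable] by (simp add: expectation_Y)
  finally show ?thesis .
qed

lemma length_laplace_le:
  assumes "\<theta> > 0" and "\<theta> * length_second_moment \<le> mean_length"
  shows "length_laplace \<theta> \<le> 1 - \<theta> * mean_length / 2"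
proof -
  have "length_laplace \<theta> \<le> expectation (\<lambda>\<omega>. 1 - \<theta> * snd (X 0 \<omega>) + \<theta>\<^sup>2 / 2 * (snd (X 0 \<omega>))\<^sup>2)"
    unfolding length_laplace_def
  proof (rule integral_mono_AE)
    show "integrable M (\<lambda>\<omega>. exp (- \<theta> * snd (X 0 \<omega>)))"
      using integrable_exp_length assms by simp
    show "integrable M (\<lambda>\<omega>. 1 - \<theta> * snd (X 0 \<omega>) + \<theta>\<^sup>2 / 2 * (snd (X 0 \<omega>))\<^sup>2)"
      using length_integrable length_square_integrable by auto
    show "AE \<omega> in M. exp (- \<theta> * snd (X 0 \<omega>)) \<le> 1 - \<theta> * snd (X 0 \<omega>) + \<theta>\<^sup>2 / 2 * (snd (X 0 \<omega>))\<^sup>2"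
      using length_pos[of 0]
    proof eventually_elim
      case (elim \<omega>)
      then show ?case
        using exp_minus_le_quadratic[of "\<theta> * snd (X 0 \<omega>)"] assms
        by (simp add: power_mult_distrib)
    qed
  qed
  also have "\<dots> = 1 - \<theta> * mean_length + \<theta> / 2 * (\<theta> * length_second_moment)"
    unfolding mean_length_def length_second_moment_def
    using length_integrable length_square_integrable by (simp add: prob_space power2_eq_square)
  also have "\<dots> \<le> 1 - \<theta> * mean_length / 2"
  proof -
    have "\<theta> / 2 * (\<theta> * length_second_moment) \<le> \<theta> / 2 * mean_length"
      using assms by (intro mult_left_mono) auto
    then show ?thesis
      by simp
  qed
  finally show ?thesis .
qed

lemma suminf_prob_arrival_le:
  assumes "t > 0"
  shows "(\<Sum>n. emeasure M (arrival_event t n)) \<le> ennreal (renewal_bound t)"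
proof -
  define m where "m = max t (length_second_moment / mean_length)"
  define \<theta> where "\<theta> = 1 / m"
  have "m > 0" "\<theta> > 0"
    using assms by (simp_all add: m_def \<theta>_def)
  have "length_second_moment = mean_length * (length_second_moment / mean_length)"
    using mean_length_pos by simp
  also have "\<dots> \<le> mean_length * m"
    using mean_length_pos by (intro mult_left_mono) (auto simp: m_def)
  finally have "length_second_moment \<le> mean_length * m" .
  then have "\<theta> * length_second_moment \<le> mean_length"
    using \<open>m > 0\<close> by (simp add: \<theta>_def field_simps)
  then have laplace_le: "length_laplace \<theta> \<le> 1 - \<theta> * mean_length / 2"
    using length_laplace_le \<open>\<theta> > 0\<close> by simp
  have gap_pos: "0 < \<theta> * mean_length / 2"
    using \<open>\<theta> > 0\<close> mean_length_pos by simp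
  have laplace_nonneg: "0 \<le> length_laplace \<theta>"
    unfolding length_laplace_def by simp
  have "(\<Sum>n. emeasure M (arrival_event t n)) \<le> (\<Sum>n. ennreal (exp (\<theta> * t) * length_laplace \<theta> ^ n))"
    by (intro suminf_le prob_arrival_le \<open>\<theta> > 0\<close>) auto
  also have "\<dots> = ennreal (exp (\<theta> * t) * (1 / (1 - length_laplace \<theta>)))"
    using laplace_nonneg laplace_le gap_pos
    by (subst suminf_ennreal2) (auto intro!: summable_mult simp: suminf_mult suminf_geometric)
  also have "exp (\<theta> * t) * (1 / (1 - length_laplace \<theta>)) \<le> exp 1 * (2 * m / mean_length)"
  proof (rule mult_mono)
    show "exp (\<theta> * t) \<le> exp 1"
      using \<open>m > 0\<close> by (simp add: \<theta>_def m_def field_simps)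
    have "1 / (1 - length_laplace \<theta>) \<le> 1 / (\<theta> * mean_length / 2)"
      using laplace_le gap_pos by (intro divide_left_mono) auto
    also have "\<dots> = 2 * m / mean_length"
      using \<open>m > 0\<close> mean_length_pos by (simp add: \<theta>_def)
    finally show "1 / (1 - length_laplace \<theta>) \<le> 2 * m / mean_length" .
  qed (use laplace_le gap_pos in auto)
  also have "exp 1 * (2 * m / mean_length) = renewal_bound t"
    by (simp add: renewal_bound_def m_def ac_simps)
  finally show ?thesis
    by (simp add: ennreal_leI)
qed

lemma renewal_bound_nonneg: "t > 0 \<Longrightarrow> renewal_bound t \<ge> 0"
  unfolding renewal_bound_def using mean_length_pos by (auto intro!: divide_nonneg_pos)

lemma sum_prob_arrival_le:
  assumes "t > 0"
  shows "(\<Sum>i<k. prob (arrival_event t i)) \<le> renewal_bound t"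
proof -
  have "ennreal (\<Sum>i<k. prob (arrival_event t i)) = (\<Sum>i<k. emeasure M (arrival_event t i))"
    by (simp add: emeasure_eq_measure)
  also have "\<dots> \<le> (\<Sum>i. emeasure M (arrival_event t i))"
    by (rule sum_le_suminf) (auto intro: summableI)
  also have "\<dots> \<le> ennreal (renewal_bound t)"
    by (rule suminf_prob_arrival_le[OF assms])
  finally show ?thesis
    using renewal_bound_nonneg[OF assms] by simp
qed

lemma AE_finite_arrivals:
  assumes "t > 0"
  shows "AE \<omega> in M. (\<forall>i. snd (X i \<omega>) > 0) \<and> finite {n. arrival n \<omega> \<le> t}"
proof -
  have "(\<integral>\<^sup>+\<omega>. (\<Sum>n. indicator (arrival_event t n) \<omega>) \<partial>M) = (\<Sum>n. emeasure M (arrival_event t n))"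
    by (subst nn_integral_suminf) auto
  also have "\<dots> < \<infinity>"
    using suminf_prob_arrival_le[OF assms] by (simp add: le_less_trans)
  finally have "AE \<omega> in M. (\<Sum>n. indicator (arrival_event t n) \<omega> :: ennreal) \<noteq> \<infinity>"
    by (intro nn_integral_PInf_AE) auto
  moreover have "AE \<omega> in M. \<forall>i. snd (X i \<omega>) > 0"
    using length_pos by (simp add: AE_all_countable)
  ultimately show ?thesis
    using AE_space
  proof eventually_elim
    case (elim \<omega>)
    have "emeasure (count_space UNIV) {n. arrival n \<omega> \<le> t}
        = (\<Sum>n. indicator {n. arrival n \<omega> \<le> t} n)"
      by (simp add: nn_integral_count_space_nat[symmetric])
    also have "\<dots> = (\<Sum>n. indicator (arrival_event t n) \<omega>)"
      using elim by (intro suminf_cong) (auto simp: arrival_event_def indicator_def)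
    finally have "emeasure (count_space UNIV) {n. arrival n \<omega> \<le> t} \<noteq> \<infinity>"
      using elim by simp
    then have "finite {n. arrival n \<omega> \<le> t}"
      by (metis emeasure_count_space_infinite infinity_ennreal_def subset_UNIV)
    with elim show ?case
      by simp
  qed
qed

lemma arrived_restrict:
  "arrived t k \<omega> = of_bool ((\<Sum>l<k. snd (restrict (\<lambda>i. X i \<omega>) {..<k} l)) \<le> t)"
proof -
  have "(\<Sum>l<k. snd (restrict (\<lambda>i. X i \<omega>) {..<k} l)) = arrival k \<omega>"
    unfolding arrival_def by (intro sum.cong) auto
  then show ?thesis
    unfolding arrived_def by simp
qed

lemma integrable_arrived[simp]: "integrable M (arrived t k)"
  by (rule integrable_const_bound[where B=1]) (auto simp: arrived_def)

text \<open>\<open>{arrival k \<le> t}\<close> depends only on the trades before \<open>k\<close>, hence is independent of trade \<open>k\<close>.\<close>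
lemma arrived_mult_trade:
  fixes h :: "bool \<times> real \<Rightarrow> real"
  assumes [measurable]: "h \<in> borel_measurable trade_space"
    and "integrable M (\<lambda>\<omega>. h (X 0 \<omega>))"
  shows "integrable M (\<lambda>\<omega>. arrived t k \<omega> * h (X k \<omega>))"
    and "expectation (\<lambda>\<omega>. arrived t k \<omega> * h (X k \<omega>))
      = prob (arrival_event t k) * expectation (\<lambda>\<omega>. h (X 0 \<omega>))"
proof -
  have h_integrable: "integrable M (\<lambda>\<omega>. h (X k \<omega>))"
    using assms integrable_trade_iff[of h k] by simp
  have "(\<lambda>x. of_bool ((\<Sum>l<k. snd (x l)) \<le> t) :: real)
      \<in> borel_measurable (PiM {..<k} (\<lambda>_. trade_space))"
    by measurable
  note indep = integral_prefix_mult_trade[OF this assms(1) arrived_restrict integrable_arrived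
      h_integrable]
  have "expectation (arrived t k) = expectation (indicator (arrival_event t k))"
    by (rule Bochner_Integration.integral_cong[OF refl])
      (auto simp: arrived_def arrival_event_def indicator_def)
  then show "integrable M (\<lambda>\<omega>. arrived t k \<omega> * h (X k \<omega>))"
    and "expectation (\<lambda>\<omega>. arrived t k \<omega> * h (X k \<omega>))
      = prob (arrival_event t k) * expectation (\<lambda>\<omega>. h (X 0 \<omega>))"
    using indep integral_trade_eq[of h k] by simp_all
qed

end

locale renewal_reward = iid_trades +
  fixes reward :: "bool \<Rightarrow> real"
begin

definition "reward_bound = \<bar>reward True\<bar> + \<bar>reward False\<bar>"
definition "reward_rate = expectation (\<lambda>\<omega>. reward (fst (X 0 \<omega>))) / mean_length"
definition "increment x = reward (fst x) - reward_rate * snd x"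
definition "increment_variance = expectation (\<lambda>\<omega>. (increment (X 0 \<omega>))\<^sup>2)"

definition "stopped_increments t k \<omega> = (\<Sum>i<k. increment (X i \<omega>) * arrived t i \<omega>)"
definition "stopped_square_lengths t k \<omega> = (\<Sum>i<k. arrived t i \<omega> * (snd (X i \<omega>))\<^sup>2)"

definition "average_reward t \<omega> =
  (1 / t) * (\<Sum>i<num_trades (\<lambda>i \<omega>. snd (X i \<omega>)) t \<omega>. reward (fst (X i \<omega>)))"

definition "deviation_bound t =
  3 * increment_variance * renewal_bound t + 3 * reward_bound\<^sup>2
  + 3 * reward_rate\<^sup>2 * length_second_moment * renewal_bound t"

lemma reward_bounded: "\<bar>reward s\<bar> \<le> reward_bound"
  unfolding reward_bound_def by (cases s) auto

lemma measurable_increment[measurable]: "increment \<in> borel_measurable trade_space"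
  unfolding increment_def by measurable

lemma measurable_stopped_increments[measurable]: "stopped_increments t k \<in> borel_measurable M"
  unfolding stopped_increments_def by measurable

lemma measurable_stopped_square_lengths[measurable]:
  "stopped_square_lengths t k \<in> borel_measurable M"
  unfolding stopped_square_lengths_def by measurable

lemma measurable_average_reward[measurable]: "average_reward t \<in> borel_measurable M"
proof -
  have [measurable]: "num_trades (\<lambda>i \<omega>. snd (X i \<omega>)) t \<in> measurable M (count_space UNIV)"
    unfolding num_trades_def by (rule measurable_card) simp
  have "(\<lambda>\<omega>. (\<lambda>n \<omega>. (1 / t) * (\<Sum>i<n. reward (fst (X i \<omega>))))
      (num_trades (\<lambda>i \<omega>. snd (X i \<omega>)) t \<omega>) \<omega>) \<in> borel_measurable M"
    by (rule measurable_compose_countable) measurable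
  then show ?thesis
    unfolding average_reward_def by simp
qed

lemma integrable_reward_trade: "integrable M (\<lambda>\<omega>. reward (fst (X i \<omega>)))"
  by (rule integrable_const_bound[where B=reward_bound]) (auto simp: reward_bounded)

lemma integrable_increment: "integrable M (\<lambda>\<omega>. increment (X i \<omega>))"
  unfolding increment_def using integrable_reward_trade length_integrable_trade by auto

lemma expectation_increment: "expectation (\<lambda>\<omega>. increment (X i \<omega>)) = 0"
proof -
  have "expectation (\<lambda>\<omega>. increment (X i \<omega>)) = expectation (\<lambda>\<omega>. increment (X 0 \<omega>))"
    by (rule integral_trade_eq) measurable
  also have "\<dots> = 0"
    unfolding increment_def reward_rate_def mean_length_def
    using integrable_reward_trade length_integrable_trade mean_length_pos
    by (simp add: mean_length_def)
  finally show ?thesis .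
qed

lemma integrable_increment_square: "integrable M (\<lambda>\<omega>. (increment (X i \<omega>))\<^sup>2)"
proof (rule Bochner_Integration.integrable_bound)
  show "integrable M (\<lambda>\<omega>. 2 * reward_bound\<^sup>2 + 2 * reward_rate\<^sup>2 * (snd (X i \<omega>))\<^sup>2)"
    using length_square_integrable_trade by auto
  show "AE \<omega> in M. norm ((increment (X i \<omega>))\<^sup>2)
      \<le> norm (2 * reward_bound\<^sup>2 + 2 * reward_rate\<^sup>2 * (snd (X i \<omega>))\<^sup>2)"
  proof (intro AE_I2)
    fix \<omega>
    define a where "a = reward (fst (X i \<omega>))"
    define b where "b = reward_rate * snd (X i \<omega>)"
    have "a\<^sup>2 \<le> reward_bound\<^sup>2"
      unfolding a_def using reward_bounded by (metis abs_ge_zero power2_abs power_mono)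
    moreover have "(a - b)\<^sup>2 \<le> 2 * a\<^sup>2 + 2 * b\<^sup>2"
      using sum_squares_ge_zero[of "a + b" 0] by (simp add: power2_eq_square algebra_simps)
    ultimately show "norm ((increment (X i \<omega>))\<^sup>2)
        \<le> norm (2 * reward_bound\<^sup>2 + 2 * reward_rate\<^sup>2 * (snd (X i \<omega>))\<^sup>2)"
      unfolding increment_def a_def b_def by (simp add: power_mult_distrib)
  qed
qed measurable

lemma expectation_stopped_increments_square:
  "integrable M (\<lambda>\<omega>. (stopped_increments t k \<omega>)\<^sup>2) \<and>
   expectation (\<lambda>\<omega>. (stopped_increments t k \<omega>)\<^sup>2)
     = increment_variance * (\<Sum>i<k. prob (arrival_event t i))"
proof (induction k)
  case 0
  then show ?case
    by (simp add: stopped_increments_def)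
next
  case (Suc k)
  let ?Q = "stopped_increments t k"
  have Q2_integrable: "integrable M (\<lambda>\<omega>. (?Q \<omega>)\<^sup>2)"
    using Suc.IH by simp
  have "integrable M ?Q"
    by (rule square_integrable_imp_integrable[OF _ Q2_integrable]) measurable
  then have stopped_integrable: "integrable M (\<lambda>\<omega>. ?Q \<omega> * arrived t k \<omega>)"
    by (rule Bochner_Integration.integrable_bound) (auto simp: arrived_def)
  have prefix_measurable: "(\<lambda>x. (\<Sum>i<k. increment (x i) * of_bool ((\<Sum>l<i. snd (x l)) \<le> t))
      * of_bool ((\<Sum>l<k. snd (x l)) \<le> t) :: real) \<in> borel_measurable (PiM {..<k} (\<lambda>_. trade_space))"
    by measurable
  have prefix_eq: "?Q \<omega> * arrived t k \<omega> =
      (\<Sum>i<k. increment (restrict (\<lambda>i. X i \<omega>) {..<k} i)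
        * of_bool ((\<Sum>l<i. snd (restrict (\<lambda>i. X i \<omega>) {..<k} l)) \<le> t))
      * of_bool ((\<Sum>l<k. snd (restrict (\<lambda>i. X i \<omega>) {..<k} l)) \<le> t)" for \<omega>
    unfolding stopped_increments_def arrived_def arrival_def
    by (auto intro!: sum.cong arg_cong2[where f=times])
  note cross = integral_prefix_mult_trade[OF prefix_measurable measurable_increment prefix_eq
      stopped_integrable integrable_increment]
  note square = arrived_mult_trade[of "\<lambda>x. (increment x)\<^sup>2" t k]
  have expand: "(stopped_increments t (Suc k) \<omega>)\<^sup>2 = (?Q \<omega>)\<^sup>2
      + 2 * ((?Q \<omega> * arrived t k \<omega>) * increment (X k \<omega>)) + arrived t k \<omega> * (increment (X k \<omega>))\<^sup>2"
    for \<omega>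
    by (simp add: stopped_increments_def arrived_def power2_eq_square algebra_simps)
  show ?case
    unfolding expand
    using Q2_integrable cross square Suc.IH integrable_increment_square[of 0]
      expectation_increment[of k]
    by (simp add: increment_variance_def algebra_simps)
qed

lemma integrable_stopped_square_lengths: "integrable M (stopped_square_lengths t k)"
  unfolding stopped_square_lengths_def
  using arrived_mult_trade(1)[of "\<lambda>x. (snd x)\<^sup>2"] length_square_integrable by auto

lemma expectation_stopped_square_lengths:
  "expectation (stopped_square_lengths t k) = length_second_moment * (\<Sum>i<k. prob (arrival_event t i))"
  unfolding stopped_square_lengths_def
  using arrived_mult_trade[of "\<lambda>x. (snd x)\<^sup>2"] length_square_integrable
  by (simp add: Bochner_Integration.integral_sum length_second_moment_def sum_distrib_left mult.commute)

lemma average_reward_deviation_le: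
  assumes "t > 0" and "\<forall>i. snd (X i \<omega>) > 0" and "finite {n. arrival n \<omega> \<le> t}"
    and "card {n. arrival n \<omega> \<le> t} \<le> k"
  shows "(average_reward t \<omega> - reward_rate)\<^sup>2
    \<le> (3 * (stopped_increments t k \<omega>)\<^sup>2 + 3 * reward_bound\<^sup>2
        + 3 * reward_rate\<^sup>2 * stopped_square_lengths t k \<omega>) / t\<^sup>2"
proof -
  let ?R = "\<Sum>i<num_trades (\<lambda>i \<omega>. snd (X i \<omega>)) t \<omega>. reward (fst (X i \<omega>))"
  have "(?R - reward_rate * t)\<^sup>2 \<le> 3 * (stopped_increments t k \<omega>)\<^sup>2 + 3 * reward_bound\<^sup>2
      + 3 * reward_rate\<^sup>2 * stopped_square_lengths t k \<omega>"
    using renewal_reward_deviation_le[of "\<lambda>i. snd (X i \<omega>)" "\<lambda>i. reward (fst (X i \<omega>))"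
        reward_bound t k reward_rate] assms reward_bounded
    unfolding num_trades_def stopped_increments_def stopped_square_lengths_def arrived_def
      arrival_def increment_def
    by (simp add: ac_simps)
  moreover have "(average_reward t \<omega> - reward_rate)\<^sup>2 = (?R - reward_rate * t)\<^sup>2 / t\<^sup>2"
    unfolding average_reward_def using assms(1) by (simp add: field_simps)
  ultimately show ?thesis
    by (simp add: divide_right_mono)
qed

text \<open>Fatou's lemma lets \<open>k \<rightarrow> \<infinity>\<close> in the bound above, which holds for all large \<open>k\<close>
  by \<open>AE_finite_arrivals\<close>.\<close>
lemma nn_integral_average_reward_deviation_le:
  assumes "t > 0"
  shows "(\<integral>\<^sup>+\<omega>. ennreal ((average_reward t \<omega> - reward_rate)\<^sup>2) \<partial>M) \<le> ennreal (deviation_bound t / t\<^sup>2)"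
proof -
  define B where "B k \<omega> = (3 * (stopped_increments t k \<omega>)\<^sup>2 + 3 * reward_bound\<^sup>2
    + 3 * reward_rate\<^sup>2 * stopped_square_lengths t k \<omega>) / t\<^sup>2" for k \<omega>
  have "AE \<omega> in M. ennreal ((average_reward t \<omega> - reward_rate)\<^sup>2) \<le> liminf (\<lambda>k. ennreal (B k \<omega>))"
    using AE_finite_arrivals[OF assms]
  proof eventually_elim
    case (elim \<omega>)
    show ?case
    proof (rule Liminf_bounded, rule eventually_sequentiallyI)
      fix k
      assume "card {n. arrival n \<omega> \<le> t} \<le> k"
      then show "ennreal ((average_reward t \<omega> - reward_rate)\<^sup>2) \<le> ennreal (B k \<omega>)"
        unfolding B_def using average_reward_deviation_le[OF assms] elim by (intro ennreal_leI) auto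
    qed
  qed
  then have "(\<integral>\<^sup>+\<omega>. ennreal ((average_reward t \<omega> - reward_rate)\<^sup>2) \<partial>M)
      \<le> (\<integral>\<^sup>+\<omega>. liminf (\<lambda>k. ennreal (B k \<omega>)) \<partial>M)"
    by (rule nn_integral_mono_AE)
  also have "\<dots> \<le> liminf (\<lambda>k. \<integral>\<^sup>+\<omega>. ennreal (B k \<omega>) \<partial>M)"
    by (rule nn_integral_liminf) (simp add: B_def)
  also have "\<dots> \<le> ennreal (deviation_bound t / t\<^sup>2)"
  proof (intro order_trans[OF Liminf_le_Limsup] Limsup_bounded always_eventually allI)
    fix k
    have sum_le: "(\<Sum>i<k. prob (arrival_event t i)) \<le> renewal_bound t"
      by (rule sum_prob_arrival_le[OF assms])
    have "stopped_square_lengths t k \<omega> \<ge> 0" for \<omega>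
      unfolding stopped_square_lengths_def arrived_def by (intro sum_nonneg) auto
    then have nn_eq: "(\<integral>\<^sup>+\<omega>. ennreal (B k \<omega>) \<partial>M) = ennreal (expectation (B k))"
      unfolding B_def using expectation_stopped_increments_square[of t k]
        integrable_stopped_square_lengths[of t k]
      by (intro nn_integral_eq_integral AE_I2) auto
    have "expectation (B k) = (3 * (increment_variance * (\<Sum>i<k. prob (arrival_event t i)))
        + 3 * reward_bound\<^sup>2
        + 3 * reward_rate\<^sup>2 * (length_second_moment * (\<Sum>i<k. prob (arrival_event t i)))) / t\<^sup>2"
      unfolding B_def using expectation_stopped_increments_square[of t k]
        integrable_stopped_square_lengths[of t k] expectation_stopped_square_lengths[of t k]
      by (simp add: prob_space)
    also have "\<dots> \<le> deviation_bound t / t\<^sup>2"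
    proof -
      have "increment_variance \<ge> 0" "length_second_moment \<ge> 0"
        by (simp_all add: increment_variance_def length_second_moment_def)
      then have "increment_variance * (\<Sum>i<k. prob (arrival_event t i))
            \<le> increment_variance * renewal_bound t"
          "reward_rate\<^sup>2 * (length_second_moment * (\<Sum>i<k. prob (arrival_event t i)))
            \<le> reward_rate\<^sup>2 * (length_second_moment * renewal_bound t)"
        using sum_le by (auto intro!: mult_left_mono)
      then show ?thesis
        unfolding deviation_bound_def by (intro divide_right_mono) auto
    qed
    finally show "(\<integral>\<^sup>+\<omega>. ennreal (B k \<omega>) \<partial>M) \<le> ennreal (deviation_bound t / t\<^sup>2)"
      unfolding nn_eq by (rule ennreal_leI)
  qed simp
  finally show ?thesis .
qed

lemma variance_average_reward_le:
  assumes "t > 0"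
  shows "integrable M (\<lambda>\<omega>. (average_reward t \<omega>)\<^sup>2)"
    and "variance (average_reward t) \<le> deviation_bound t / t\<^sup>2"
proof -
  let ?G = "average_reward t" and ?\<rho> = reward_rate
  note nn_bound = nn_integral_average_reward_deviation_le[OF assms]
  have dev2_integrable: "integrable M (\<lambda>\<omega>. (?G \<omega> - ?\<rho>)\<^sup>2)"
    using nn_bound by (intro integrableI_bounded) (auto simp: le_less_trans)
  have "integrable M (\<lambda>\<omega>. ?G \<omega> - ?\<rho>)"
    by (rule square_integrable_imp_integrable[OF _ dev2_integrable]) measurable
  then have G_integrable: "integrable M ?G"
    using Bochner_Integration.integrable_add[of M "\<lambda>\<omega>. ?G \<omega> - ?\<rho>" "\<lambda>_. ?\<rho>"] by simp
  have "(\<lambda>\<omega>. (?G \<omega>)\<^sup>2) = (\<lambda>\<omega>. (?G \<omega> - ?\<rho>)\<^sup>2 + 2 * ?\<rho> * (?G \<omega> - ?\<rho>) + ?\<rho>\<^sup>2)"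
    by (auto simp: power2_diff algebra_simps power2_eq_square)
  then show G2_integrable: "integrable M (\<lambda>\<omega>. (?G \<omega>)\<^sup>2)"
    using dev2_integrable \<open>integrable M (\<lambda>\<omega>. ?G \<omega> - ?\<rho>)\<close> by simp
  have "deviation_bound t \<ge> 0"
    unfolding deviation_bound_def increment_variance_def length_second_moment_def
    using renewal_bound_nonneg[OF assms] by auto
  then have "expectation (\<lambda>\<omega>. (?G \<omega> - ?\<rho>)\<^sup>2) \<le> deviation_bound t / t\<^sup>2"
    using nn_bound nn_integral_eq_integral[OF dev2_integrable] by (simp add: ennreal_le_iff)
  then show "variance ?G \<le> deviation_bound t / t\<^sup>2"
    using variance_le_expectation_square_diff[OF G_integrable G2_integrable, of ?\<rho>] by linarith
qed

lemma variance_average_reward_bigo: "(\<lambda>t. variance (average_reward t)) \<in> O[at_top](\<lambda>t. 1 / t)"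
proof -
  define A where "A = (3 * increment_variance + 3 * reward_rate\<^sup>2 * length_second_moment)
    * (2 * exp 1 / mean_length)"
  define B where "B = 3 * reward_bound\<^sup>2"
  have "B \<ge> 0"
    by (simp add: B_def)
  show ?thesis
  proof (rule bigoI[where c="A + B"], unfold eventually_at_top_linorder,
      intro exI[of _ "max 1 (length_second_moment / mean_length)"] allI impI)
    fix t :: real
    assume "max 1 (length_second_moment / mean_length) \<le> t"
    then have "1 \<le> t" and "t > 0" and "length_second_moment / mean_length \<le> t"
      by auto
    then have "deviation_bound t = A * t + B"
      unfolding deviation_bound_def renewal_bound_def A_def B_def by (simp add: algebra_simps)
    also have "\<dots> \<le> (A + B) * t"
      using mult_left_mono[OF \<open>1 \<le> t\<close> \<open>B \<ge> 0\<close>] by (simp add: algebra_simps)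
    finally have "variance (average_reward t) \<le> (A + B) * t / t\<^sup>2"
      using variance_average_reward_le(2)[OF \<open>t > 0\<close>] \<open>t > 0\<close>
      by (smt (verit) divide_right_mono zero_le_power2)
    then show "norm (variance (average_reward t)) \<le> (A + B) * norm (1 / t)"
      using variance_positive[of "average_reward t"] \<open>t > 0\<close> by (simp add: power2_eq_square)
  qed
qed

end

lemma trade_factor_pos:
  assumes "c < U - D" and "0 \<le> f" and "0 < 1 + f * vminus L D c"
  shows "0 < trade_factor f L D U c s"
proof (cases s)
  case True
  have "0 \<le> f * vplus D U c"
    using assms(1,2) by (simp add: vplus_def)
  with True show ?thesis
    by (simp add: trade_factor_def)
qed (use assms(3) in \<open>simp add: trade_factor_def\<close>)

lemma growth_rate_eq_sum_ln_trade_factor: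
  assumes "W0 > 0" and "\<And>s. 0 < trade_factor f L D U c s"
  shows "growth_rate W0 f L D U c S T t \<omega>
    = (1 / t) * (\<Sum>i<num_trades T t \<omega>. ln (trade_factor f L D U c (S i \<omega>)))"
  unfolding growth_rate_def wealth_def using assms by (simp add: ln_prod less_imp_neq[symmetric])

theorem proposition2:
  fixes M :: "'a measure"
    and S :: "nat \<Rightarrow> 'a \<Rightarrow> bool"
    and T :: "nat \<Rightarrow> 'a \<Rightarrow> real"
    and L D U c f W0 :: real
  assumes "prob_space M"
    and "c > 0" and "L < D" and "D < U" and "U - D > c" and "f \<ge> 0"
    and "1 + f * vminus L D c > 0"
    and "W0 > 0"
    and "prob_space.indep_vars M (\<lambda>_. trade_space) (\<lambda>i \<omega>. (S i \<omega>, T i \<omega>)) UNIV"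
    and "\<And>i. distr M trade_space (\<lambda>\<omega>. (S i \<omega>, T i \<omega>))
              = distr M trade_space (\<lambda>\<omega>. (S 0 \<omega>, T 0 \<omega>))"
    and "\<And>i. AE \<omega> in M. T i \<omega> > 0"
    and "integrable M (T 0)"
    and "integrable M (\<lambda>\<omega>. (T 0 \<omega>)\<^sup>2)"
  shows "(\<forall>t>0. integrable M (\<lambda>\<omega>. (growth_rate W0 f L D U c S T t \<omega>)\<^sup>2))
       \<and> (\<lambda>t. prob_space.variance M (growth_rate W0 f L D U c S T t)) \<in> O[at_top](\<lambda>t. 1 / t)"
proof -
  interpret prob_space M
    by fact
  interpret R: renewal_reward M "\<lambda>i \<omega>. (S i \<omega>, T i \<omega>)" "\<lambda>s. ln (trade_factor f L D U c s)"
    by unfold_locales (use assms(9-13) in simp_all)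
  have "growth_rate W0 f L D U c S T t = R.average_reward t" for t
    by (simp add: fun_eq_iff R.average_reward_def
        growth_rate_eq_sum_ln_trade_factor[OF \<open>W0 > 0\<close> trade_factor_pos[OF assms(5-7)]])
  then show ?thesis
    using R.variance_average_reward_le(1) R.variance_average_reward_bigo by simp
qed

end
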